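(* Let $f:\mathbb{C}\to\mathbb{C}$ be an entire function of exponential type $\sigma>0$ such that $|f(x)|\le A/(1+x^2)$ for all $x\in\mathbb{R}$, for some $A>0$. Then for all $z=x+iy\in\mathbb{C}$ ($x,y\in\mathbb{R}$), $$|f(z)|\le\frac{Ae^{\sigma|y|}}{1+x^2}.$$
   Context: An entire function $f$ is of exponential type if there are constants $M,\tau>0$ with $|f(z)|\le Me^{\tau|z|}$ for all $z\in\mathbb{C}$; it is of exponential type $\sigma$ if $\sigma$ is the infimum of all such $\tau$. *)

theory Defs
  imports "HOL-Analysis.Analysis"
begin

definition exp_type_bounds :: "(complex \<Rightarrow> complex) \<Rightarrow> real set" where
  "exp_type_bounds f = {\<tau>. \<tau> > 0 \<and> (\<exists>M>0. \<forall>z. norm (f z) \<le> M * exp (\<tau> * norm z))}"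

definition exponential_type :: "(complex \<Rightarrow> complex) \<Rightarrow> bool" where
  "exponential_type f \<longleftrightarrow> f holomorphic_on UNIV \<and> exp_type_bounds f \<noteq> {}"

definition of_exponential_type :: "(complex \<Rightarrow> complex) \<Rightarrow> real \<Rightarrow> bool" where
  "of_exponential_type f \<sigma> \<longleftrightarrow> exponential_type f \<and> \<sigma> = Inf (exp_type_bounds f)"

end

theory Submission
  imports Defs "HOL-Complex_Analysis.Complex_Analysis" "HOL-Real_Asymp.Real_Asymp"
begin

(*
  Multiplying f by (z + i)^2 turns the decay hypothesis into |H| <= A on the real line for an
  entire H of exponential type, and |(z + i)^2| >= 1 + x^2 in the closed upper half-plane.
  For such H the Phragmen-Lindelof principle gives |H z| <= A e^(tau Im z): the function
  H z e^(i tau z) is bounded on the real axis and on the positive imaginary axis, hence in each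
  quadrant of the upper half-plane (damping by exp(-e ((1 - i) z + 1)^(3/2)), which decays faster
  than any exponential there), and then bounded by A (damping by 1 / (1 - i e z)).
  The lower half-plane follows by z |-> -z, and tau decreases to the type sigma, which need not
  itself be an admissible growth rate.
*)

lemma le_limit_at_right:
  fixes g :: "real \<Rightarrow> real"
  assumes "\<And>e. e > c \<Longrightarrow> a \<le> g e" and "(g \<longlongrightarrow> L) (at_right c)"
  shows "a \<le> L"
proof (rule tendsto_lowerbound[OF assms(2)])
  show "\<forall>\<^sub>F x in at_right c. a \<le> g x"
    using eventually_at_right_less[of c] by (rule eventually_mono) (rule assms(1))
qed simp

lemma maximum_modulus_bounded_at_infinity:
  fixes g :: "complex \<Rightarrow> complex"
  assumes "closed C" "open U" "C \<subseteq> U" "g holomorphic_on U"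
    and frontier: "\<And>\<xi>. \<xi> \<in> frontier C \<Longrightarrow> norm (g \<xi>) \<le> K"
    and far: "\<And>\<xi>. \<xi> \<in> C \<Longrightarrow> R \<le> norm \<xi> \<Longrightarrow> norm (g \<xi>) \<le> K"
    and "z \<in> C"
  shows "norm (g z) \<le> K"
proof -
  define r where "r = max R 0 + norm z + 1"
  have r: "r > 0" "R \<le> r" "norm z < r"
    unfolding r_def using norm_ge_zero[of z] by linarith+
  have cl: "closure (C \<inter> ball 0 r) \<subseteq> C \<inter> cball 0 r"
    using assms(1) by (intro closure_minimal) auto
  show ?thesis
  proof (rule maximum_modulus_frontier[where f = g and S = "C \<inter> ball 0 r" and \<xi> = z])
    show "g holomorphic_on interior (C \<inter> ball 0 r)"
      using assms(3,4) interior_subset by (blast intro: holomorphic_on_subset)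
    show "continuous_on (closure (C \<inter> ball 0 r)) g"
      using cl assms(3) holomorphic_on_imp_continuous_on[OF assms(4)]
      by (blast intro: continuous_on_subset)
    show "bounded (C \<inter> ball 0 r)" using bounded_ball bounded_Int by blast
    show "z \<in> C \<inter> ball 0 r" using \<open>z \<in> C\<close> r by simp
  next
    fix \<xi> assume "\<xi> \<in> frontier (C \<inter> ball 0 r)"
    then have "\<xi> \<in> C \<inter> cball 0 r" "\<xi> \<in> frontier C \<or> norm \<xi> = r"
      using cl r(1) by (auto simp: frontier_Int)
    then show "norm (g \<xi>) \<le> K" using frontier far r(2) by auto
  qed
qed

lemma frontier_quadrant:
  "frontier {\<xi>::complex. 0 \<le> Re \<xi> \<and> 0 \<le> Im \<xi>} \<subseteq> {\<xi>. Re \<xi> = 0 \<or> Im \<xi> = 0}"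
proof -
  let ?Q = "{\<xi>::complex. 0 \<le> Re \<xi> \<and> 0 \<le> Im \<xi>}"
  have "open {\<xi>::complex. 0 < Re \<xi> \<and> 0 < Im \<xi>}"
    by (intro open_Collect_conj open_Collect_less continuous_intros)
  then have "{\<xi>. 0 < Re \<xi> \<and> 0 < Im \<xi>} \<subseteq> interior ?Q"
    by (rule interior_maximal[rotated]) auto
  moreover have "closed ?Q"
    by (intro closed_Collect_conj closed_Collect_le continuous_intros)
  ultimately show ?thesis by (force simp: frontier_def)
qed

lemma frontier_upper_halfplane:
  "frontier {\<xi>::complex. 0 \<le> Im \<xi>} = {\<xi>. Im \<xi> = 0}"
  using frontier_halfspace_ge[of \<i> 0] by (simp add: inner_complex_def)

lemma csqrt_sector_bounds:
  fixes v :: complex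
  assumes "\<bar>Im v\<bar> \<le> Re v"
  shows "Re (csqrt v) ^ 3 / 4 \<le> Re (csqrt v ^ 3)" and "norm v \<le> 5/4 * Re (csqrt v) ^ 2"
proof -
  define p where "p = Re (csqrt v)"
  define q where "q = Im (csqrt v)"
  have "p \<ge> 0" unfolding p_def by (rule Re_csqrt)
  have "v = csqrt v ^ 2" by simp
  then have "Re v = p^2 - q^2" "Im v = 2 * p * q"
    unfolding p_def q_def by (metis Re_power2, metis Im_power2 mult.assoc)
  with assms \<open>p \<ge> 0\<close> have "2 * p * \<bar>q\<bar> \<le> p^2 - q^2" by (simp add: abs_mult)
  \<comment> \<open>the square root lies in the sector \<open>|arg| \<le> \<pi>/8\<close>, so \<open>|q| \<le> p/2\<close>\<close>
  have "2 * \<bar>q\<bar> \<le> p"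
  proof (rule ccontr)
    assume "\<not> 2 * \<bar>q\<bar> \<le> p"
    with \<open>p \<ge> 0\<close> have "p^2 \<le> p * (2 * \<bar>q\<bar>)" "\<bar>q\<bar> > 0"
      using mult_left_mono[of p "2 * \<bar>q\<bar>" p] by (auto simp: power2_eq_square)
    with \<open>2 * p * \<bar>q\<bar> \<le> p^2 - q^2\<close> have "q^2 \<le> 0" by linarith
    with \<open>\<bar>q\<bar> > 0\<close> show False by simp
  qed
  then have q2: "q^2 \<le> p^2 / 4"
    using power_mono[of "2 * \<bar>q\<bar>" p 2] by (simp add: power_mult_distrib)
  have "Re (csqrt v ^ 3) = p^3 - 3 * p * q^2"
    unfolding p_def q_def by (simp add: numeral_3_eq_3 power2_eq_square algebra_simps)
  also have "\<dots> \<ge> p^3 - 3 * p * (p^2 / 4)"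
    using q2 \<open>p \<ge> 0\<close> by (intro diff_left_mono mult_left_mono) auto
  finally show "Re (csqrt v) ^ 3 / 4 \<le> Re (csqrt v ^ 3)"
    unfolding p_def[symmetric] by (simp add: power3_eq_cube power2_eq_square)
  have "norm v = norm (csqrt v) ^ 2" by (metis norm_power power2_csqrt)
  also have "\<dots> = p^2 + q^2" unfolding p_def q_def by (rule cmod_power2)
  also have "\<dots> \<le> 5/4 * p^2" using q2 by simp
  finally show "norm v \<le> 5/4 * Re (csqrt v) ^ 2" unfolding p_def .
qed

text \<open>The map \<open>\<xi> \<mapsto> (1 - \<i>) \<xi> + 1\<close> sends the closed first quadrant into the sector
  \<open>|arg| \<le> \<pi>/4\<close>; the shift by 1 keeps it away from the branch point of \<open>csqrt\<close>.\<close>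
lemma quadrant_csqrt_bounds:
  assumes "0 \<le> Re \<xi>" "0 \<le> Im \<xi>"
  defines "q \<equiv> csqrt ((1 - \<i>) * \<xi> + 1)"
  shows "Re q ^ 3 / 4 \<le> Re (q ^ 3)" and "norm \<xi> \<le> 5/4 * Re q ^ 2 + 1" and "0 \<le> Re (q ^ 3)"
proof -
  let ?w = "(1 - \<i>) * \<xi> + 1"
  have "\<bar>Im ?w\<bar> \<le> Re ?w" using assms by simp
  note sector = csqrt_sector_bounds[OF this, folded q_def]
  then show "Re q ^ 3 / 4 \<le> Re (q ^ 3)" by simp
  moreover have "0 \<le> Re q ^ 3 / 4" using Re_csqrt[of ?w] unfolding q_def by simp
  ultimately show "0 \<le> Re (q ^ 3)" by linarith
  have "cmod (1 - \<i>) = sqrt 2" by (simp add: cmod_def)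
  then have "norm \<xi> \<le> norm ((1 - \<i>) * \<xi>)"
    using mult_right_mono[of 1 "sqrt 2" "norm \<xi>"] by (simp add: norm_mult)
  also have "\<dots> \<le> norm ?w + 1" by (metis add_diff_cancel norm_triangle_ineq4 norm_one)
  finally show "norm \<xi> \<le> 5/4 * Re q ^ 2 + 1" using sector(2) by simp
qed

lemma quadrant_damping_beats_exponential:
  fixes \<tau> e M K :: real
  assumes "e > 0" "\<tau> \<ge> 0" "K > 0" "M \<ge> 0"
  obtains R where "\<And>\<xi>. 0 \<le> Re \<xi> \<Longrightarrow> 0 \<le> Im \<xi> \<Longrightarrow> R \<le> norm \<xi> \<Longrightarrow>
    M * exp (\<tau> * norm \<xi>) * exp (- e * Re (csqrt ((1 - \<i>) * \<xi> + 1) ^ 3)) \<le> K"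
proof -
  have "((\<lambda>p. M * exp (\<tau> * (5/4 * p^2 + 1) - e * p^3 / 4)) \<longlongrightarrow> 0) at_top"
    using \<open>e > 0\<close> by real_asymp
  then have "\<forall>\<^sub>F p in at_top. M * exp (\<tau> * (5/4 * p^2 + 1) - e * p^3 / 4) < K"
    using \<open>K > 0\<close> by (simp add: order_tendstoD(2))
  then obtain P0 where P0: "\<And>p. P0 \<le> p \<Longrightarrow> M * exp (\<tau> * (5/4 * p^2 + 1) - e * p^3 / 4) < K"
    by (auto simp: eventually_at_top_linorder)
  define P where "P = max P0 0"
  have P: "P \<ge> 0" "\<And>p. P \<le> p \<Longrightarrow> M * exp (\<tau> * (5/4 * p^2 + 1) - e * p^3 / 4) < K"
    using P0 unfolding P_def by auto
  show ?thesis
  proof (rule that[of "5/4 * P^2 + 1"])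
    fix \<xi> :: complex
    assume \<xi>: "0 \<le> Re \<xi>" "0 \<le> Im \<xi>" "5/4 * P^2 + 1 \<le> norm \<xi>"
    define p where "p = Re (csqrt ((1 - \<i>) * \<xi> + 1))"
    note bounds = quadrant_csqrt_bounds[OF \<xi>(1,2), folded p_def]
    have "P^2 \<le> p^2" using \<xi>(3) bounds(2) by simp
    then have "P \<le> p" using Re_csqrt[of "(1 - \<i>) * \<xi> + 1"] unfolding p_def
      by (rule power2_le_imp_le)
    have "M * exp (\<tau> * norm \<xi>) * exp (- e * Re (csqrt ((1 - \<i>) * \<xi> + 1) ^ 3))
        \<le> M * exp (\<tau> * (5/4 * p^2 + 1)) * exp (- e * p^3 / 4)"
      using \<open>M \<ge> 0\<close>
    proof (intro mult_mono mult_left_mono)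
      show "exp (\<tau> * norm \<xi>) \<le> exp (\<tau> * (5/4 * p^2 + 1))"
        using bounds(2) \<open>\<tau> \<ge> 0\<close> by (simp add: mult_left_mono)
      show "exp (- e * Re (csqrt ((1 - \<i>) * \<xi> + 1) ^ 3)) \<le> exp (- e * p^3 / 4)"
        using bounds(1) \<open>e > 0\<close> by (simp add: p_def)
    qed simp_all
    also have "\<dots> = M * exp (\<tau> * (5/4 * p^2 + 1) - e * p^3 / 4)"
      unfolding mult.assoc exp_add[symmetric] by (simp add: algebra_simps)
    also have "\<dots> < K" using P(2) \<open>P \<le> p\<close> .
    finally show "M * exp (\<tau> * norm \<xi>) * exp (- e * Re (csqrt ((1 - \<i>) * \<xi> + 1) ^ 3)) \<le> K"
      by simp
  qed
qed

lemma phragmen_lindelof_quadrant_damped: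
  fixes h :: "complex \<Rightarrow> complex"
  assumes hol: "h holomorphic_on UNIV" and "\<tau> \<ge> 0" "K > 0" "e > 0"
    and grow: "\<And>\<xi>. norm (h \<xi>) \<le> M * exp (\<tau> * norm \<xi>)"
    and frontier: "\<And>\<xi>. \<xi> \<in> frontier {\<xi>. 0 \<le> Re \<xi> \<and> 0 \<le> Im \<xi>} \<Longrightarrow> norm (h \<xi>) \<le> K"
    and z: "0 \<le> Re z" "0 \<le> Im z"
  shows "norm (h z) * exp (- e * Re (csqrt ((1 - \<i>) * z + 1) ^ 3)) \<le> K"
proof -
  let ?Q = "{\<xi>::complex. 0 \<le> Re \<xi> \<and> 0 \<le> Im \<xi>}"
  let ?U = "{\<xi>::complex. 0 < Re ((1 - \<i>) * \<xi> + 1)}"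
  define q where "q \<xi> = csqrt ((1 - \<i>) * \<xi> + 1)" for \<xi>
  define g where "g \<xi> = h \<xi> * exp (- of_real e * q \<xi> ^ 3)" for \<xi>
  have norm_g: "norm (g \<xi>) = norm (h \<xi>) * exp (- e * Re (q \<xi> ^ 3))" for \<xi>
    unfolding g_def norm_mult norm_exp_eq_Re by simp
  have "closed ?Q" by (intro closed_Collect_conj closed_Collect_le continuous_intros)
  have "M \<ge> 0" using order_trans[OF norm_ge_zero grow[of 0]] by simp
  obtain R where R: "\<And>\<xi>. 0 \<le> Re \<xi> \<Longrightarrow> 0 \<le> Im \<xi> \<Longrightarrow> R \<le> norm \<xi> \<Longrightarrow>
      M * exp (\<tau> * norm \<xi>) * exp (- e * Re (q \<xi> ^ 3)) \<le> K"
    using quadrant_damping_beats_exponential[OF \<open>e > 0\<close> \<open>\<tau> \<ge> 0\<close> \<open>K > 0\<close> \<open>M \<ge> 0\<close>]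
    unfolding q_def by blast
  have "norm (g z) \<le> K"
  proof (rule maximum_modulus_bounded_at_infinity[where g = g and C = ?Q and U = ?U and R = R])
    show "open ?U" by (intro open_Collect_less continuous_intros)
    show "g holomorphic_on ?U"
      unfolding g_def q_def
      by (intro holomorphic_intros holomorphic_on_subset[OF hol]) (auto simp: complex_nonpos_Reals_iff)
    show "norm (g \<xi>) \<le> K" if "\<xi> \<in> frontier ?Q" for \<xi>
    proof -
      have "\<xi> \<in> ?Q" using that frontier_subset_closed[OF \<open>closed ?Q\<close>] by blast
      then have "exp (- e * Re (q \<xi> ^ 3)) \<le> 1"
        using quadrant_csqrt_bounds(3)[of \<xi>] \<open>e > 0\<close> unfolding q_def by simp
      then have "norm (h \<xi>) * exp (- e * Re (q \<xi> ^ 3)) \<le> K * 1"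
        using frontier[OF that] \<open>K > 0\<close> by (intro mult_mono) auto
      then show ?thesis unfolding norm_g by simp
    qed
    show "norm (g \<xi>) \<le> K" if "\<xi> \<in> ?Q" "R \<le> norm \<xi>" for \<xi>
    proof -
      have "norm (g \<xi>) \<le> M * exp (\<tau> * norm \<xi>) * exp (- e * Re (q \<xi> ^ 3))"
        unfolding norm_g using grow[of \<xi>] by (rule mult_right_mono) simp
      also have "\<dots> \<le> K" using that R[of \<xi>] by simp
      finally show ?thesis .
    qed
  qed (use \<open>closed ?Q\<close> z in auto)
  then show ?thesis by (simp add: norm_g q_def)
qed

lemma phragmen_lindelof_quadrant:
  fixes h :: "complex \<Rightarrow> complex"
  assumes hol: "h holomorphic_on UNIV" and "\<tau> \<ge> 0" "K > 0"
    and grow: "\<And>\<xi>. norm (h \<xi>) \<le> M * exp (\<tau> * norm \<xi>)"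
    and real_axis: "\<And>x. x \<ge> 0 \<Longrightarrow> norm (h (of_real x)) \<le> K"
    and imag_axis: "\<And>y. y \<ge> 0 \<Longrightarrow> norm (h (\<i> * of_real y)) \<le> K"
    and z: "0 \<le> Re z" "0 \<le> Im z"
  shows "norm (h z) \<le> K"
proof -
  let ?Q = "{\<xi>::complex. 0 \<le> Re \<xi> \<and> 0 \<le> Im \<xi>}"
  define c where "c = Re (csqrt ((1 - \<i>) * z + 1) ^ 3)"
  have "closed ?Q" by (intro closed_Collect_conj closed_Collect_le continuous_intros)
  have frontier_bound: "norm (h \<xi>) \<le> K" if "\<xi> \<in> frontier ?Q" for \<xi>
  proof -
    have "\<xi> \<in> ?Q" "Re \<xi> = 0 \<or> Im \<xi> = 0"
      using that frontier_subset_closed[OF \<open>closed ?Q\<close>] frontier_quadrant by blast+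
    then consider "\<xi> = \<i> * of_real (Im \<xi>)" "0 \<le> Im \<xi>" | "\<xi> = of_real (Re \<xi>)" "0 \<le> Re \<xi>"
      by (auto simp: complex_eq_iff)
    then show ?thesis using real_axis imag_axis by cases metis+
  qed
  have "norm (h z) \<le> K * exp (e * c)" if "e > 0" for e
    using phragmen_lindelof_quadrant_damped[OF hol \<open>\<tau> \<ge> 0\<close> \<open>K > 0\<close> that grow frontier_bound z]
    unfolding c_def by (simp add: exp_minus field_simps)
  moreover have "((\<lambda>e. K * exp (e * c)) \<longlongrightarrow> K) (at_right 0)"
    by (auto intro!: tendsto_eq_intros)
  ultimately show ?thesis by (rule le_limit_at_right)
qed

lemma norm_one_minus_ii_mult_ge:
  fixes e :: real
  assumes "0 \<le> e" "0 \<le> Im \<xi>"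
  shows "1 \<le> norm (1 - \<i> * of_real e * \<xi>)" and "e * norm \<xi> \<le> norm (1 - \<i> * of_real e * \<xi>)"
proof -
  let ?d = "1 - \<i> * of_real e * \<xi>"
  have "Re ?d = 1 + e * Im \<xi>" "Im ?d = - e * Re \<xi>" by simp_all
  moreover have "1 \<le> 1 + e * Im \<xi>" "e * Im \<xi> \<le> 1 + e * Im \<xi>" using assms by simp_all
  ultimately have "1 \<le> Re ?d" "(e * norm \<xi>)^2 \<le> norm ?d ^ 2"
    using power_mono[of "e * Im \<xi>" "1 + e * Im \<xi>" 2] assms
    by (simp_all add: cmod_power2 power_mult_distrib algebra_simps)
  then show "1 \<le> norm ?d" "e * norm \<xi> \<le> norm ?d"
    using complex_Re_le_cmod[of ?d] by (auto intro: power2_le_imp_le)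
qed

lemma phragmen_lindelof_halfplane_bounded_damped:
  fixes h :: "complex \<Rightarrow> complex"
  assumes hol: "h holomorphic_on UNIV" and "A > 0" "e > 0"
    and bounded: "\<And>\<xi>. 0 \<le> Im \<xi> \<Longrightarrow> norm (h \<xi>) \<le> K"
    and real_axis: "\<And>x. norm (h (of_real x)) \<le> A"
    and z: "0 \<le> Im z"
  shows "norm (h z) \<le> A * norm (1 - \<i> * of_real e * z)"
proof -
  let ?H = "{\<xi>::complex. 0 \<le> Im \<xi>}"
  define d where "d \<xi> = 1 - \<i> * of_real e * \<xi>" for \<xi>
  let ?U = "{\<xi>. 0 < Re (d \<xi>)}"
  note d_ge = norm_one_minus_ii_mult_ge[OF less_imp_le[OF \<open>e > 0\<close>], folded d_def]
  have quotient_le: "norm (h \<xi> / d \<xi>) \<le> A" if "0 \<le> Im \<xi>" "norm (h \<xi>) \<le> A * norm (d \<xi>)" for \<xi>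
  proof -
    have "0 < norm (d \<xi>)" using d_ge(1)[OF that(1)] by linarith
    with that(2) show ?thesis by (simp add: norm_divide pos_divide_le_eq mult.commute)
  qed
  have "norm (h z / d z) \<le> A"
  proof (rule maximum_modulus_bounded_at_infinity
      [where g = "\<lambda>\<xi>. h \<xi> / d \<xi>" and C = ?H and U = ?U and R = "K / (e * A)"])
    show "closed ?H" by (intro closed_Collect_le continuous_intros)
    show "open ?U" unfolding d_def by (intro open_Collect_less continuous_intros)
    show "?H \<subseteq> ?U" using \<open>e > 0\<close> by (auto simp: d_def add_pos_nonneg)
    show "(\<lambda>\<xi>. h \<xi> / d \<xi>) holomorphic_on ?U"
    proof (rule holomorphic_on_divide)
      show "d holomorphic_on ?U" unfolding d_def by (intro holomorphic_intros)
    qed (auto intro: holomorphic_on_subset[OF hol])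
    show "norm (h \<xi> / d \<xi>) \<le> A" if "\<xi> \<in> frontier ?H" for \<xi>
    proof (rule quotient_le)
      have "Im \<xi> = 0" using that frontier_upper_halfplane by simp
      then have "\<xi> = of_real (Re \<xi>)" by (simp add: complex_eq_iff)
      then have "norm (h \<xi>) \<le> A" using real_axis by metis
      also have "\<dots> \<le> A * norm (d \<xi>)"
        using d_ge(1)[of \<xi>] \<open>Im \<xi> = 0\<close> \<open>A > 0\<close> by (simp add: mult_le_cancel_left1)
      finally show "norm (h \<xi>) \<le> A * norm (d \<xi>)" .
    qed (use that frontier_upper_halfplane in simp)
    show "norm (h \<xi> / d \<xi>) \<le> A" if "\<xi> \<in> ?H" "K / (e * A) \<le> norm \<xi>" for \<xi>
    proof (rule quotient_le)
      have "norm (h \<xi>) \<le> K" using bounded that(1) by simp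
      also have "\<dots> \<le> A * (e * norm \<xi>)"
        using that(2) \<open>e > 0\<close> \<open>A > 0\<close> by (simp add: pos_divide_le_eq mult_ac)
      also have "\<dots> \<le> A * norm (d \<xi>)"
        using d_ge(2)[of \<xi>] that(1) \<open>A > 0\<close> by simp
      finally show "norm (h \<xi>) \<le> A * norm (d \<xi>)" .
    qed (use that in simp)
  qed (use z in simp)
  moreover have "0 < norm (d z)" using d_ge(1)[OF z] by linarith
  ultimately have "norm (h z) \<le> A * norm (d z)"
    by (simp add: norm_divide pos_divide_le_eq mult.commute)
  then show ?thesis by (simp add: d_def)
qed

lemma phragmen_lindelof_halfplane_bounded:
  fixes h :: "complex \<Rightarrow> complex"
  assumes hol: "h holomorphic_on UNIV" and "A > 0"
    and bounded: "\<And>\<xi>. 0 \<le> Im \<xi> \<Longrightarrow> norm (h \<xi>) \<le> K"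
    and real_axis: "\<And>x. norm (h (of_real x)) \<le> A"
    and z: "0 \<le> Im z"
  shows "norm (h z) \<le> A"
proof (rule le_limit_at_right)
  show "norm (h z) \<le> A * norm (1 - \<i> * of_real e * z)" if "e > 0" for e
    by (rule phragmen_lindelof_halfplane_bounded_damped[OF hol \<open>A > 0\<close> that bounded real_axis z])
  show "((\<lambda>e. A * norm (1 - \<i> * of_real e * z)) \<longlongrightarrow> A) (at_right 0)"
    by (auto intro!: tendsto_eq_intros)
qed

lemma phragmen_lindelof_halfplane_axes:
  fixes h :: "complex \<Rightarrow> complex"
  assumes hol: "h holomorphic_on UNIV" and "\<tau> \<ge> 0" "K > 0"
    and grow: "\<And>\<xi>. norm (h \<xi>) \<le> M * exp (\<tau> * norm \<xi>)"
    and real_axis: "\<And>x. norm (h (of_real x)) \<le> K"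
    and imag_axis: "\<And>y. y \<ge> 0 \<Longrightarrow> norm (h (\<i> * of_real y)) \<le> K"
    and z: "0 \<le> Im z"
  shows "norm (h z) \<le> K"
proof (cases "0 \<le> Re z")
  case True
  then show ?thesis
    using phragmen_lindelof_quadrant[OF hol \<open>\<tau> \<ge> 0\<close> \<open>K > 0\<close> grow real_axis imag_axis _ z] by simp
next
  case False
  have "norm (h (\<i> * (- \<i> * z))) \<le> K"
  proof (rule phragmen_lindelof_quadrant[where h = "\<lambda>\<zeta>. h (\<i> * \<zeta>)" and M = M])
    show "(\<lambda>\<zeta>. h (\<i> * \<zeta>)) holomorphic_on UNIV"
      by (rule holomorphic_on_compose_gen[OF _ hol, unfolded o_def]) (auto intro: holomorphic_intros)
    show "norm (h (\<i> * \<zeta>)) \<le> M * exp (\<tau> * norm \<zeta>)" for \<zeta>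
      using grow[of "\<i> * \<zeta>"] by (simp add: norm_mult)
    show "norm (h (\<i> * (\<i> * of_real y))) \<le> K" for y
      using real_axis[of "- y"] by simp
  qed (use imag_axis \<open>\<tau> \<ge> 0\<close> \<open>K > 0\<close> False z in auto)
  then show ?thesis by simp
qed

lemma phragmen_lindelof_halfplane_exponential_type:
  fixes H :: "complex \<Rightarrow> complex"
  assumes hol: "H holomorphic_on UNIV" and "A > 0" "\<tau> \<ge> 0"
    and grow: "\<And>\<xi>. norm (H \<xi>) \<le> M * exp (\<tau> * norm \<xi>)"
    and real_axis: "\<And>x. norm (H (of_real x)) \<le> A"
    and z: "0 \<le> Im z"
  shows "norm (H z) \<le> A * exp (\<tau> * Im z)"
proof -
  define h where "h \<xi> = H \<xi> * exp (\<i> * of_real \<tau> * \<xi>)" for \<xi>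
  have norm_h: "norm (h \<xi>) = norm (H \<xi>) * exp (- \<tau> * Im \<xi>)" for \<xi>
    unfolding h_def norm_mult norm_exp_eq_Re by simp
  have hol_h: "h holomorphic_on UNIV" unfolding h_def by (intro holomorphic_intros hol)
  have "M \<ge> 0" using order_trans[OF norm_ge_zero grow[of 0]] by simp
  have grow_h: "norm (h \<xi>) \<le> M * exp (2 * \<tau> * norm \<xi>)" for \<xi>
  proof -
    have "exp (- \<tau> * Im \<xi>) \<le> exp (\<tau> * norm \<xi>)"
      using abs_Im_le_cmod[of \<xi>] \<open>\<tau> \<ge> 0\<close> mult_left_mono[of "- Im \<xi>" "norm \<xi>" \<tau>] by simp
    then have "norm (h \<xi>) \<le> M * exp (\<tau> * norm \<xi>) * exp (\<tau> * norm \<xi>)"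
      unfolding norm_h using grow[of \<xi>] \<open>M \<ge> 0\<close> by (intro mult_mono) auto
    also have "\<dots> = M * exp (2 * \<tau> * norm \<xi>)" by (simp add: mult.assoc exp_add[symmetric])
    finally show ?thesis .
  qed
  have real_axis_h: "norm (h (of_real x)) \<le> A" for x
    using real_axis[of x] by (simp add: norm_h)
  have imag_axis_h: "norm (h (\<i> * of_real y)) \<le> M" if "y \<ge> 0" for y
  proof -
    have "norm (h (\<i> * of_real y)) \<le> M * exp (\<tau> * y) * exp (- \<tau> * y)"
      using grow[of "\<i> * of_real y"] that by (simp add: norm_h norm_mult)
    also have "\<dots> = M" by (simp add: mult.assoc exp_add[symmetric])
    finally show ?thesis .
  qed
  have "norm (h \<xi>) \<le> max A M" if "0 \<le> Im \<xi>" for \<xi>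
  proof (rule phragmen_lindelof_halfplane_axes[OF hol_h _ _ grow_h _ _ that])
    show "norm (h (of_real x)) \<le> max A M" for x using real_axis_h[of x] by simp
    show "norm (h (\<i> * of_real y)) \<le> max A M" if "y \<ge> 0" for y using imag_axis_h[OF that] by simp
  qed (use \<open>\<tau> \<ge> 0\<close> \<open>A > 0\<close> in auto)
  then have "norm (h z) \<le> A"
    by (rule phragmen_lindelof_halfplane_bounded[OF hol_h \<open>A > 0\<close> _ real_axis_h z])
  then show ?thesis by (simp add: norm_h exp_minus field_simps)
qed

lemma square_le_exp_linear:
  fixes \<delta> :: real
  assumes "\<delta> > 0"
  obtains C where "\<And>r. r \<ge> 0 \<Longrightarrow> (r + 1)^2 \<le> C * exp (\<delta> * r)"
proof -
  have "((\<lambda>r. (r + 1)^2 / exp (\<delta> * r)) \<longlongrightarrow> 0) at_top" using \<open>\<delta> > 0\<close> by real_asymp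
  then have "\<forall>\<^sub>F r in at_top. (r + 1)^2 / exp (\<delta> * r) < 1" by (rule order_tendstoD(2)) simp
  then obtain R where R: "\<And>r. r \<ge> R \<Longrightarrow> (r + 1)^2 < exp (\<delta> * r)"
    by (auto simp: eventually_at_top_linorder)
  show ?thesis
  proof (rule that[of "(\<bar>R\<bar> + 1)^2"])
    fix r :: real
    assume "r \<ge> 0"
    show "(r + 1)^2 \<le> (\<bar>R\<bar> + 1)^2 * exp (\<delta> * r)"
    proof (cases "r \<ge> R")
      case True
      then have "(r + 1)^2 \<le> 1 * exp (\<delta> * r)" using R[of r] by simp
      also have "\<dots> \<le> (\<bar>R\<bar> + 1)^2 * exp (\<delta> * r)"
        by (intro mult_right_mono) (auto simp: one_le_power)
      finally show ?thesis .
    next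
      case False
      then have "(r + 1)^2 \<le> (\<bar>R\<bar> + 1)^2" using \<open>r \<ge> 0\<close> by (intro power_mono) auto
      also have "\<dots> \<le> (\<bar>R\<bar> + 1)^2 * exp (\<delta> * r)"
        using \<open>\<delta> > 0\<close> \<open>r \<ge> 0\<close> by (simp add: mult_le_cancel_left1)
      finally show ?thesis .
    qed
  qed
qed

lemma weighted_bound_upper_halfplane:
  fixes F :: "complex \<Rightarrow> complex"
  assumes hol: "F holomorphic_on UNIV" and "A > 0" "0 \<le> \<tau>0" "\<tau>0 < \<tau>"
    and grow: "\<And>\<xi>. norm (F \<xi>) \<le> M * exp (\<tau>0 * norm \<xi>)"
    and real_axis: "\<And>x::real. norm (F (of_real x)) \<le> A / (1 + x\<^sup>2)"
    and z: "0 \<le> Im z"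
  shows "norm (F z) \<le> A * exp (\<tau> * Im z) / (1 + (Re z)\<^sup>2)"
proof -
  define H where "H \<xi> = (\<xi> + \<i>)^2 * F \<xi>" for \<xi>
  have norm_H: "norm (H \<xi>) = ((Re \<xi>)^2 + (Im \<xi> + 1)^2) * norm (F \<xi>)" for \<xi>
    unfolding H_def norm_mult norm_power cmod_power2 by simp
  obtain C where C: "\<And>r. r \<ge> 0 \<Longrightarrow> (r + 1)^2 \<le> C * exp ((\<tau> - \<tau>0) * r)"
    using square_le_exp_linear[of "\<tau> - \<tau>0"] \<open>\<tau>0 < \<tau>\<close> by auto
  have "norm (H z) \<le> A * exp (\<tau> * Im z)"
  proof (rule phragmen_lindelof_halfplane_exponential_type[where M = "C * M"])
    show "H holomorphic_on UNIV" unfolding H_def by (intro holomorphic_intros hol)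
    show "norm (H \<xi>) \<le> C * M * exp (\<tau> * norm \<xi>)" for \<xi>
    proof -
      have "norm ((\<xi> + \<i>)^2) \<le> (norm \<xi> + 1)^2"
        unfolding norm_power using norm_triangle_ineq[of \<xi> \<i>] by (intro power_mono) auto
      also have "\<dots> \<le> C * exp ((\<tau> - \<tau>0) * norm \<xi>)" by (rule C) simp
      finally have weight: "norm ((\<xi> + \<i>)^2) \<le> C * exp ((\<tau> - \<tau>0) * norm \<xi>)" .
      have "norm (H \<xi>) \<le> C * exp ((\<tau> - \<tau>0) * norm \<xi>) * (M * exp (\<tau>0 * norm \<xi>))"
        unfolding H_def norm_mult using weight order_trans[OF norm_ge_zero weight] grow[of \<xi>]
        by (intro mult_mono) auto
      also have "\<dots> = C * M * exp (\<tau> * norm \<xi>)"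
        by (simp add: mult_ac exp_add[symmetric] algebra_simps)
      finally show ?thesis .
    qed
    show "norm (H (of_real x)) \<le> A" for x
      using real_axis[of x] by (simp add: norm_H field_simps add_pos_nonneg)
  qed (use \<open>A > 0\<close> \<open>0 \<le> \<tau>0\<close> \<open>\<tau>0 < \<tau>\<close> z in auto)
  moreover have "(1 + (Re z)^2) * norm (F z) \<le> norm (H z)"
    unfolding norm_H using z by (intro mult_right_mono) (auto simp: one_le_power)
  ultimately show ?thesis by (simp add: pos_le_divide_eq add_pos_nonneg mult.commute)
qed

lemma weighted_bound_exp_abs_Im:
  fixes F :: "complex \<Rightarrow> complex"
  assumes hol: "F holomorphic_on UNIV" and "A > 0" "0 \<le> \<tau>0" "\<tau>0 < \<tau>"
    and grow: "\<And>\<xi>. norm (F \<xi>) \<le> M * exp (\<tau>0 * norm \<xi>)"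
    and real_axis: "\<And>x::real. norm (F (of_real x)) \<le> A / (1 + x\<^sup>2)"
  shows "norm (F z) \<le> A * exp (\<tau> * \<bar>Im z\<bar>) / (1 + (Re z)\<^sup>2)"
proof (cases "0 \<le> Im z")
  case True
  then show ?thesis using weighted_bound_upper_halfplane[OF assms] by simp
next
  case False
  have "norm (F (- (- z))) \<le> A * exp (\<tau> * Im (- z)) / (1 + (Re (- z))\<^sup>2)"
  proof (rule weighted_bound_upper_halfplane[where F = "\<lambda>\<xi>. F (- \<xi>)" and M = M])
    show "(\<lambda>\<xi>. F (- \<xi>)) holomorphic_on UNIV"
      by (rule holomorphic_on_compose_gen[OF _ hol, unfolded o_def]) (auto intro: holomorphic_intros)
    show "norm (F (- \<xi>)) \<le> M * exp (\<tau>0 * norm \<xi>)" for \<xi> using grow[of "- \<xi>"] by simp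
    show "norm (F (- of_real x)) \<le> A / (1 + x\<^sup>2)" for x using real_axis[of "- x"] by simp
  qed (use assms(2-4) False in auto)
  then show ?thesis using False by simp
qed

theorem mainTheorem6:
  fixes f :: "complex \<Rightarrow> complex" and \<sigma> A :: real
  assumes "of_exponential_type f \<sigma>" and "\<sigma> > 0" and "A > 0"
    and "\<And>x::real. norm (f (complex_of_real x)) \<le> A / (1 + x\<^sup>2)"
  shows "\<And>x y :: real. norm (f (Complex x y)) \<le> A * exp (\<sigma> * \<bar>y\<bar>) / (1 + x\<^sup>2)"
proof -
  fix x y :: real
  have hol: "f holomorphic_on UNIV" and bounds: "exp_type_bounds f \<noteq> {}"
    and \<sigma>: "\<sigma> = Inf (exp_type_bounds f)"
    using assms(1) unfolding of_exponential_type_def exponential_type_def by auto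
  have "norm (f (Complex x y)) \<le> A * exp (\<tau> * \<bar>y\<bar>) / (1 + x\<^sup>2)" if \<tau>: "\<tau> > \<sigma>" for \<tau>
  proof -
    obtain \<tau>0 where "\<tau>0 \<in> exp_type_bounds f" "\<tau>0 < \<tau>"
      using cInf_lessD[OF bounds, of \<tau>] \<tau> \<sigma> by auto
    then obtain M where "0 < \<tau>0" and grow: "\<And>z. norm (f z) \<le> M * exp (\<tau>0 * norm z)"
      unfolding exp_type_bounds_def by auto
    have "norm (f z) \<le> A * exp (\<tau> * \<bar>Im z\<bar>) / (1 + (Re z)\<^sup>2)" for z
      using weighted_bound_exp_abs_Im[OF hol \<open>A > 0\<close> _ \<open>\<tau>0 < \<tau>\<close> grow assms(4)] \<open>0 < \<tau>0\<close> by simp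
    from this[of "Complex x y"] show ?thesis by simp
  qed
  moreover have "((\<lambda>\<tau>. A * exp (\<tau> * \<bar>y\<bar>) / (1 + x\<^sup>2)) \<longlongrightarrow> A * exp (\<sigma> * \<bar>y\<bar>) / (1 + x\<^sup>2))
      (at_right \<sigma>)"
    using add_pos_nonneg[OF zero_less_one zero_le_power2[of x]] by (intro tendsto_intros) simp
  ultimately show "norm (f (Complex x y)) \<le> A * exp (\<sigma> * \<bar>y\<bar>) / (1 + x\<^sup>2)"
    by (rule le_limit_at_right)
qed

end
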